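(* Let $G$ be a graph with vertices labelled $1,\dots,n$, let $A$ be a normal subgroup of $\mathbb{Z}_2^{*V(G)}$ that is $\mathrm{End}\,G$-invariant (i.e. $\phi(A)\subset A$ for every graph homomorphism $\phi\colon G\to G$), and let $\Gamma=\mathbb{Z}_2^{*V(G)}/A$. Then there exists a group-theoretical graph category $\mathscr{C}$ such that $\mathscr{C}^G$ is the representation category of the quantum group $\mathbb{G}=\hat\Gamma\rtimes\mathrm{Aut}\,G$, i.e. $\mathscr{C}^G(k,l)=\mathrm{Mor}(u^{\otimes k},u^{\otimes l})$ for all $k,l\in\mathbb{N}_0$, where $u$ is the fundamental representation of $\mathbb{G}$.
   Context: Graphs are finite, undirected, without multiple edges, loops allowed, up to isomorphism; $N_k$ is the edgeless graph on $k$ vertices; graph homomorphisms map edges (including loops) to edges, and a vertex map $\phi$ induces a homomorphism of the groups $\mathbb{Z}_2^{*V}$ (generated by $V$ subject to $v^2=e$), also denoted $\phi$. A bilabelled graph is $(K,\mathbf{a},\mathbf{b})$ with $\mathbf{a}\in V(K)^k$, $\mathbf{b}\in V(K)^l$, up to isomorphism preserving tuples; $\mathscr{C}(k,l)$ those with $k$ inputs, $l$ outputs. Operations: tensor product $(K,\mathbf{a},\mathbf{b})\otimes(H,\mathbf{c},\mathbf{d})=(K\sqcup H,\mathbf{a}\mathbf{c},\mathbf{b}\mathbf{d})$; composition (for $|\mathbf{b}|=|\mathbf{c}|$) $(H,\mathbf{c},\mathbf{d})\cdot(K,\mathbf{a},\mathbf{b})=(H\cdot K,\mathbf{a},\mathbf{d})$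 with $H\cdot K$ the quotient of $K\sqcup H$ identifying $b_i$ with $c_i$ (edges between quotient vertices iff between some representatives); involution swaps the tuples. For a partition $\pi$ of $V(K)$, $K/\pi$ has the blocks as vertices with an edge between two (possibly equal) blocks iff $K$ has one between some of their elements, and $(K,\mathbf{a},\mathbf{b})/\pi=(K/\pi,q_\pi(\mathbf{a}),q_\pi(\mathbf{b}))$ with $q_\pi$ the quotient map. A graph category is a set of bilabelled graphs containing $(N_0,\emptyset,\emptyset)$, $(M,(v),(v))$, $(M,\emptyset,(v,v))$ ($M$ the one-vertex loopless graph with vertex $v$) and closed under tensor products, compositions and involution; it is group-theoretical if also closed under all quotients $\mathbf{K}\mapsto\mathbf{K}/\pi$. $\hat T^G_{(K,\mathbf{a},\mathbf{b})}\colon(\mathbb{C}^n)^{\otimes k}\to(\mathbb{C}^n)^{\otimes l}$ has $(\mathbf{j},\mathbf{i})$-entry $\#\{\phi\colon K\to G\text{ injective homomorphism}\mid\phi(\mathbf{a})=\mathbf{i},\phi(\mathbf{b})=\mathbf{j}\}$ and $\mathscr{C}^G(k,l)=\mathrm{span}\{\hat T^G_{\mathbf{K}}\mid\mathbf{K}\in\mathscr{C}(k,l)\}$. Quantum groups: for an orthogonal compact matrix quantum group $(O(\mathbb{G}),u)$, $\mathrm{Mor}(u^{\otimes k},u^{\otimes l})=\{T\mid Tu^{\otimes k}=u^{\otimes l}T\}$. A permutation group $H\subset S_n$ is $(O(H),v)$ with $v_{ij}(\sigma)=\delta_{i\sigma(j)}$; $\mathrm{Aut}\,G\subset S_n$ via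 the labelling. For $\Gamma$ a quotient of $\mathbb{Z}_2^{*n}$ by an $H$-invariant normal subgroup, with $\gamma_i\in\mathbb{C}\Gamma$ the images of the generators, $\hat\Gamma\rtimes H$ is $(\mathbb{C}\Gamma\otimes O(H),u)$ with $u_{ij}=\gamma_i\otimes v_{ij}$. *)

theory Defs
  imports Complex_Main "HOL-Algebra.Coset" "HOL-Combinatorics.Permutations"
    "HOL-Library.Disjoint_Sets" "HOL-Library.FuncSet"
begin

text \<open>Isomorphism classes are represented by
 sets of concrete representatives closed under isomorphism.\<close>

record bgraph =
  bV :: "nat set"
  bE :: "(nat \<times> nat) set"
  bin :: "nat list"
  bout :: "nat list"

definition wf_bg :: "bgraph \<Rightarrow> bool" where
  "wf_bg K \<longleftrightarrow> finite (bV K) \<and> bE K \<subseteq> bV K \<times> bV K \<and> sym (bE K)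
     \<and> set (bin K) \<subseteq> bV K \<and> set (bout K) \<subseteq> bV K"

definition bg_iso :: "bgraph \<Rightarrow> bgraph \<Rightarrow> bool" where
  "bg_iso K K' \<longleftrightarrow> (\<exists>f. bij_betw f (bV K) (bV K')
     \<and> (\<forall>x\<in>bV K. \<forall>y\<in>bV K. (x, y) \<in> bE K \<longleftrightarrow> (f x, f y) \<in> bE K')
     \<and> map f (bin K) = bin K' \<and> map f (bout K) = bout K')"

definition tensor :: "bgraph \<Rightarrow> bgraph \<Rightarrow> bgraph" where
  "tensor K H = \<lparr> bV = (\<lambda>x. 2*x) ` bV K \<union> (\<lambda>x. 2*x+1) ` bV H,
     bE = (\<lambda>(x,y). (2*x, 2*y)) ` bE K \<union> (\<lambda>(x,y). (2*x+1, 2*y+1)) ` bE H,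
     bin = map (\<lambda>x. 2*x) (bin K) @ map (\<lambda>x. 2*x+1) (bin H),
     bout = map (\<lambda>x. 2*x) (bout K) @ map (\<lambda>x. 2*x+1) (bout H) \<rparr>"

definition qblock :: "nat set set \<Rightarrow> nat \<Rightarrow> nat set" where
  "qblock P x = (THE B. B \<in> P \<and> x \<in> B)"

definition qmap :: "nat set set \<Rightarrow> nat \<Rightarrow> nat" where
  "qmap P x = Min (qblock P x)"

definition bg_quot :: "bgraph \<Rightarrow> nat set set \<Rightarrow> bgraph" where
  "bg_quot K P = \<lparr> bV = qmap P ` bV K,
     bE = (\<lambda>(x,y). (qmap P x, qmap P y)) ` bE K,
     bin = map (qmap P) (bin K), bout = map (qmap P) (bout K) \<rparr>"

text \<open>Composition H cdot K (requires length (bout K) = length (bin H)):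
 quotient of the disjoint union of K and H identifying the i-th output of K with the
 i-th input of H; inputs are those of K, outputs those of H.\<close>
definition compose :: "bgraph \<Rightarrow> bgraph \<Rightarrow> bgraph" where
  "compose H K = (let D = tensor K H;
       S = {(2 * (bout K ! i), 2 * (bin H ! i) + 1) | i. i < length (bout K)};
       R = (S \<union> S\<inverse>)\<^sup>* \<inter> (bV D \<times> bV D)
     in bg_quot (D\<lparr> bin := map (\<lambda>x. 2*x) (bin K), bout := map (\<lambda>x. 2*x+1) (bout H) \<rparr>)
                (bV D // R))"

definition involution :: "bgraph \<Rightarrow> bgraph" where
  "involution K = K\<lparr> bin := bout K, bout := bin K \<rparr>"

definition N0 :: bgraph where
  "N0 = \<lparr> bV = {}, bE = {}, bin = [], bout = [] \<rparr>"

definition Mid :: bgraph where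
  "Mid = \<lparr> bV = {0}, bE = {}, bin = [0], bout = [0] \<rparr>"

definition Mpair :: bgraph where
  "Mpair = \<lparr> bV = {0}, bE = {}, bin = [], bout = [0, 0] \<rparr>"

definition graph_category :: "bgraph set \<Rightarrow> bool" where
  "graph_category C \<longleftrightarrow>
     (\<forall>K\<in>C. wf_bg K)
   \<and> (\<forall>K\<in>C. \<forall>K'. wf_bg K' \<and> bg_iso K K' \<longrightarrow> K' \<in> C)
   \<and> N0 \<in> C \<and> Mid \<in> C \<and> Mpair \<in> C
   \<and> (\<forall>K\<in>C. \<forall>H\<in>C. tensor K H \<in> C)
   \<and> (\<forall>K\<in>C. \<forall>H\<in>C. length (bout K) = length (bin H) \<longrightarrow> compose H K \<in> C)
   \<and> (\<forall>K\<in>C. involution K \<in> C)"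

definition group_theoretical :: "bgraph set \<Rightarrow> bool" where
  "group_theoretical C \<longleftrightarrow> graph_category C
     \<and> (\<forall>K\<in>C. \<forall>P. partition_on (bV K) P \<longrightarrow> bg_quot K P \<in> C)"

text \<open>The graph G has vertex set {0..<n} (labels 1..n shifted to 0..n-1) and edge
 relation EG. A matrix T : maps between tensor powers is a function T j i with
 j in idx n l, i in idx n k, and value 0 elsewhere.\<close>

definition idx :: "nat \<Rightarrow> nat \<Rightarrow> nat list set" where
  "idx n k = {xs. length xs = k \<and> set xs \<subseteq> {0..<n}}"

definition hatT :: "nat \<Rightarrow> (nat \<times> nat) set \<Rightarrow> bgraph \<Rightarrow> nat list \<Rightarrow> nat list \<Rightarrow> complex" where
  "hatT n EG K j i = of_nat (card {\<phi> \<in> bV K \<rightarrow>\<^sub>E {0..<n}. inj_on \<phi> (bV K)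
      \<and> (\<forall>(x,y)\<in>bE K. (\<phi> x, \<phi> y) \<in> EG)
      \<and> map \<phi> (bin K) = i \<and> map \<phi> (bout K) = j})"

definition lin_span :: "(nat list \<Rightarrow> nat list \<Rightarrow> complex) set \<Rightarrow> (nat list \<Rightarrow> nat list \<Rightarrow> complex) set" where
  "lin_span S = {T. \<exists>F c. finite F \<and> F \<subseteq> S \<and> T = (\<lambda>j i. \<Sum>X\<in>F. c X * X j i)}"

definition CG :: "nat \<Rightarrow> (nat \<times> nat) set \<Rightarrow> bgraph set \<Rightarrow> nat \<Rightarrow> nat \<Rightarrow> (nat list \<Rightarrow> nat list \<Rightarrow> complex) set" where
  "CG n EG C k l = lin_span {hatT n EG K | K. K \<in> C \<and> length (bin K) = k \<and> length (bout K) = l}"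

definition reduced :: "nat list \<Rightarrow> bool" where
  "reduced w \<longleftrightarrow> (\<forall>i. Suc i < length w \<longrightarrow> w ! i \<noteq> w ! Suc i)"

definition red_push :: "nat \<Rightarrow> nat list \<Rightarrow> nat list" where
  "red_push x ys = (case ys of [] \<Rightarrow> [x] | y # ys' \<Rightarrow> (if x = y then ys' else x # ys))"

definition red :: "nat list \<Rightarrow> nat list" where
  "red w = foldr red_push w []"

definition Z2free :: "nat \<Rightarrow> nat list monoid" where
  "Z2free n = \<lparr> carrier = {w. set w \<subseteq> {0..<n} \<and> reduced w},
               monoid.mult = (\<lambda>v w. red (v @ w)), one = [] \<rparr>"

definition End_invariant :: "nat \<Rightarrow> (nat \<times> nat) set \<Rightarrow> nat list set \<Rightarrow> bool" where
  "End_invariant n EG A \<longleftrightarrow> (\<forall>\<phi>. (\<forall>x<n. \<phi> x < n) \<and> (\<forall>(x,y)\<in>EG. (\<phi> x, \<phi> y) \<in> EG)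
      \<longrightarrow> (\<forall>w\<in>A. red (map \<phi> w) \<in> A))"

definition Gam :: "nat \<Rightarrow> nat list set \<Rightarrow> nat list set monoid" where
  "Gam n A = Z2free n Mod A"

definition gam :: "nat \<Rightarrow> nat list set \<Rightarrow> nat \<Rightarrow> nat list set" where
  "gam n A i = A #>\<^bsub>Z2free n\<^esub> [i]"

definition Aut :: "nat \<Rightarrow> (nat \<times> nat) set \<Rightarrow> (nat \<Rightarrow> nat) set" where
  "Aut n EG = {\<sigma>. \<sigma> permutes {0..<n} \<and> (\<forall>x<n. \<forall>y<n. (x,y) \<in> EG \<longleftrightarrow> (\<sigma> x, \<sigma> y) \<in> EG)}"

section \<open>The algebra C Gamma tensor O(Aut G), realised as functions from Aut G to C Gamma\<close>

text \<open>An element x is given by coefficients x sigma g (sigma in Aut G, g in Gamma), finitely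
 supported in g. The product is pointwise in sigma and convolution in g.\<close>

type_synonym alg = "(nat \<Rightarrow> nat) \<Rightarrow> nat list set \<Rightarrow> complex"

definition amult :: "nat list set monoid \<Rightarrow> alg \<Rightarrow> alg \<Rightarrow> alg" where
  "amult \<Gamma> x y = (\<lambda>\<sigma> g. \<Sum>(h1,h2) \<in> {(h1,h2). h1 \<in> carrier \<Gamma> \<and> h2 \<in> carrier \<Gamma>
       \<and> x \<sigma> h1 \<noteq> 0 \<and> y \<sigma> h2 \<noteq> 0 \<and> h1 \<otimes>\<^bsub>\<Gamma>\<^esub> h2 = g}. x \<sigma> h1 * y \<sigma> h2)"

definition aone :: "nat list set monoid \<Rightarrow> alg" where
  "aone \<Gamma> = (\<lambda>\<sigma> g. if g = \<one>\<^bsub>\<Gamma>\<^esub> then 1 else 0)"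

text \<open>u_{ij} = gamma_i otimes v_{ij}, with v_{ij}(sigma) = delta_{i,sigma(j)}.\<close>
definition ufund :: "nat \<Rightarrow> nat list set \<Rightarrow> nat \<Rightarrow> nat \<Rightarrow> alg" where
  "ufund n A i j = (\<lambda>\<sigma> g. if g = gam n A i \<and> i = \<sigma> j then 1 else 0)"

definition utens :: "nat \<Rightarrow> nat list set \<Rightarrow> nat list \<Rightarrow> nat list \<Rightarrow> alg" where
  "utens n A p i = foldr (\<lambda>(a,b) acc. amult (Gam n A) (ufund n A a b) acc) (zip p i) (aone (Gam n A))"

text \<open>Mor(u^{otimesk}, u^{otimesl}) = {T | T u^{otimesk} = u^{otimesl} T}.\<close>
definition Mor :: "nat \<Rightarrow> (nat \<times> nat) set \<Rightarrow> nat list set \<Rightarrow> nat \<Rightarrow> nat \<Rightarrow> (nat list \<Rightarrow> nat list \<Rightarrow> complex) set" where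
  "Mor n EG A k l = {T. (\<forall>j i. \<not> (j \<in> idx n l \<and> i \<in> idx n k) \<longrightarrow> T j i = 0)
     \<and> (\<forall>j\<in>idx n l. \<forall>i\<in>idx n k. \<forall>\<sigma>\<in>Aut n EG. \<forall>g\<in>carrier (Gam n A).
          (\<Sum>p\<in>idx n k. T j p * utens n A p i \<sigma> g)
        = (\<Sum>q\<in>idx n l. utens n A j q \<sigma> g * T q i))}"

end

theory Submission
  imports Defs
begin

text \<open>Take for the category all bilabelled graphs (K, a, b) such that every homomorphism
  \<phi> from K to G sends the input word a and the output word b to the same element of \<Gamma>.
  Homomorphisms out of tensor products, composites, quotients and isomorphic copies restrict
  to homomorphisms out of the pieces, so this class is a group-theoretical graph category.

  A matrix T intertwines the tensor powers of u exactly when it is Aut G-invariant and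
  T j i \<noteq> 0 forces \<gamma>_i = \<gamma>_j; every matrix of a graph in the category has both properties.
  Conversely, End G-invariance of A puts G itself, bilabelled by any (i, j) with
  \<gamma>_i = \<gamma>_j, into the category. Injective endomorphisms of G are automorphisms, so the
  matrix of this graph counts the automorphisms mapping (j, i) to a given pair of tuples,
  and averaging over Aut G writes every invariant T as a combination of these matrices.\<close>

section \<open>Reduced words in the free product of copies of Z_2\<close>

lemma reduced_Nil [simp]: "reduced []"
  by (simp add: reduced_def)

lemma reduced_Cons: "reduced (x # w) \<longleftrightarrow> reduced w \<and> (w = [] \<or> hd w \<noteq> x)"
  by (cases w) (auto simp: reduced_def nth_Cons split: nat.splits)

lemma reduced_red_push: "reduced w \<Longrightarrow> reduced (red_push x w)"
  by (cases w) (auto simp: red_push_def reduced_Cons)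

lemma red_push_red_push: "reduced w \<Longrightarrow> red_push x (red_push x w) = w"
  by (cases w) (auto simp: red_push_def reduced_Cons split: list.splits)

lemma red_Nil [simp]: "red [] = []"
  by (simp add: red_def)

lemma red_Cons: "red (x # w) = red_push x (red w)"
  by (simp add: red_def)

lemma reduced_red: "reduced (red w)"
  by (induction w) (auto simp: red_Cons reduced_red_push)

lemma set_red_subset: "set (red w) \<subseteq> set w"
proof (induction w)
  case (Cons x w)
  have "set (red_push x (red w)) \<subseteq> insert x (set (red w))"
    by (cases "red w") (auto simp: red_push_def)
  with Cons show ?case by (auto simp: red_Cons)
qed simp

lemma foldr_red_push_red_push:
  assumes "reduced w" "reduced u"
  shows "foldr red_push (red_push x w) u = red_push x (foldr red_push w u)"
proof (cases w)
  case (Cons y w')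
  have "reduced (foldr red_push w' u)"
    using assms(2) by (induction w') (auto simp: reduced_red_push)
  with Cons red_push_red_push show ?thesis
    by (auto simp: red_push_def)
qed (simp add: red_push_def)

lemma foldr_red_push_red: "reduced u \<Longrightarrow> foldr red_push (red v) u = foldr red_push v u"
  by (induction v) (simp_all add: red_Cons foldr_red_push_red_push reduced_red)

lemma red_red [simp]: "red (red w) = red w"
  using foldr_red_push_red[of "[]" w] by (simp add: red_def)

lemma red_append: "red (v @ w) = foldr red_push v (red w)"
  by (simp add: red_def)

lemma red_append_red: "red (red v @ red w) = red (v @ w)"
  by (simp add: red_append foldr_red_push_red reduced_red)

lemma red_map_red_push:
  assumes "reduced w"
  shows "red (map f (red_push x w)) = red_push (f x) (red (map f w))"
proof (cases w)
  case (Cons y w')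
  then show ?thesis
    using red_push_red_push[OF reduced_red, of "f x" "map f w'"]
    by (auto simp: red_push_def red_Cons)
qed (simp add: red_push_def red_Cons)

lemma red_map_red: "red (map f (red w)) = red (map f w)"
  by (induction w) (simp_all add: red_Cons red_map_red_push reduced_red)

lemma red_rev_append: "red (rev w @ w) = []"
proof (induction w rule: rev_induct)
  case (snoc x w)
  have "red ((rev w @ w) @ [x]) = red (red (rev w @ w) @ red [x])"
    by (simp only: red_append_red)
  also have "\<dots> = [x]"
    using snoc by (simp add: red_Cons red_push_def)
  finally show ?case by (simp add: red_Cons red_push_def)
qed simp

definition gam_word :: "nat \<Rightarrow> nat list set \<Rightarrow> nat list \<Rightarrow> nat list set" where
  "gam_word n A w = A #>\<^bsub>Z2free n\<^esub> red w"

lemma red_in_Z2free: "set w \<subseteq> {0..<n} \<Longrightarrow> red w \<in> carrier (Z2free n)"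
  using set_red_subset[of w] reduced_red[of w] by (auto simp: Z2free_def)

lemma Z2free_mult: "v \<otimes>\<^bsub>Z2free n\<^esub> w = red (v @ w)"
  by (simp add: Z2free_def)

lemma Gam_mult: "x \<otimes>\<^bsub>Gam n A\<^esub> y = x <#>\<^bsub>Z2free n\<^esub> y"
  by (simp add: Gam_def FactGroup_def)

lemma Gam_one: "\<one>\<^bsub>Gam n A\<^esub> = A"
  by (simp add: Gam_def FactGroup_def)

lemma gam_eq_gam_word: "gam n A a = gam_word n A [a]"
  by (simp add: gam_def gam_word_def red_Cons red_push_def)

lemma gam_word_double: "gam_word n A [a, a] = gam_word n A []"
  by (simp add: gam_word_def red_Cons red_push_def)

text \<open>The group laws of Z2free n are never proved here: they are part of the hypothesis that
  A is a normal subgroup of it.\<close>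

context
  fixes n A
  assumes normal: "normal A (Z2free n)"
begin

lemma gam_word_Nil: "gam_word n A [] = A"
proof -
  interpret normal A "Z2free n" by (rule normal)
  show ?thesis
    using coset_mult_one[OF subset] by (simp add: gam_word_def Z2free_def)
qed

lemma gam_word_in_Gam:
  assumes "set w \<subseteq> {0..<n}"
  shows "gam_word n A w \<in> carrier (Gam n A)"
proof -
  interpret normal A "Z2free n" by (rule normal)
  show ?thesis
    using rcosetsI[OF subset red_in_Z2free[OF assms]] by (simp add: gam_word_def Gam_def FactGroup_def)
qed

lemma gam_word_append:
  assumes "set v \<subseteq> {0..<n}" "set w \<subseteq> {0..<n}"
  shows "gam_word n A (v @ w) = gam_word n A v \<otimes>\<^bsub>Gam n A\<^esub> gam_word n A w"
proof -
  interpret normal A "Z2free n" by (rule normal)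
  show ?thesis
    using assms by (simp add: gam_word_def Gam_mult rcos_sum red_in_Z2free Z2free_mult red_append_red)
qed

lemma inv_red:
  assumes w: "set w \<subseteq> {0..<n}"
  shows "inv\<^bsub>Z2free n\<^esub> (red w) = red (rev w)"
proof -
  interpret normal A "Z2free n" by (rule normal)
  have "red (rev w) \<otimes>\<^bsub>Z2free n\<^esub> red w = \<one>\<^bsub>Z2free n\<^esub>"
    by (simp add: Z2free_mult red_append_red red_rev_append) (simp add: Z2free_def)
  then show ?thesis
    using inv_equality red_in_Z2free w by simp
qed

lemma gam_word_eq_iff:
  assumes v: "set v \<subseteq> {0..<n}" and w: "set w \<subseteq> {0..<n}"
  shows "gam_word n A v = gam_word n A w \<longleftrightarrow> red (v @ rev w) \<in> A"
proof -
  interpret normal A "Z2free n" by (rule normal)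
  have "gam_word n A v = gam_word n A w \<longleftrightarrow> red v \<in> A #>\<^bsub>Z2free n\<^esub> red w"
    unfolding gam_word_def
    using repr_independence[OF _ red_in_Z2free[OF w] is_subgroup]
      repr_independenceD[OF is_subgroup red_in_Z2free[OF v]]
    by metis
  also have "\<dots> \<longleftrightarrow> red v \<otimes>\<^bsub>Z2free n\<^esub> inv\<^bsub>Z2free n\<^esub> (red w) \<in> A"
    by (rule rcos_module[OF is_group red_in_Z2free[OF w] red_in_Z2free[OF v]])
  also have "red v \<otimes>\<^bsub>Z2free n\<^esub> inv\<^bsub>Z2free n\<^esub> (red w) = red (v @ rev w)"
    using inv_red[OF w] by (simp add: Z2free_mult red_append_red)
  finally show ?thesis .
qed

text \<open>End-invariance of A enters the proof only through this lemma.\<close>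

lemma gam_word_map:
  assumes inv: "End_invariant n EG A"
    and f: "\<forall>x<n. f x < n" "\<forall>(x, y)\<in>EG. (f x, f y) \<in> EG"
    and v: "set v \<subseteq> {0..<n}" and w: "set w \<subseteq> {0..<n}"
    and eq: "gam_word n A v = gam_word n A w"
  shows "gam_word n A (map f v) = gam_word n A (map f w)"
proof -
  have "red (v @ rev w) \<in> A"
    using gam_word_eq_iff[OF v w] eq by simp
  then have "red (map f (red (v @ rev w))) \<in> A"
    using inv f unfolding End_invariant_def by blast
  then have "red (map f v @ rev (map f w)) \<in> A"
    by (simp add: red_map_red rev_map)
  moreover have "set (map f v) \<subseteq> {0..<n}" "set (map f w) \<subseteq> {0..<n}"
    using f v w by auto
  ultimately show ?thesis
    using gam_word_eq_iff by blast
qed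

lemma utens_apply:
  "length p = length i \<Longrightarrow> set p \<subseteq> {0..<n} \<Longrightarrow>
    utens n A p i \<sigma> g = (if g = gam_word n A p \<and> p = map \<sigma> i then 1 else 0)"
proof (induction p i arbitrary: g rule: list_induct2)
  case Nil
  then show ?case
    by (simp add: utens_def aone_def Gam_one gam_word_Nil)
next
  case (Cons a p b i)
  have a: "set [a] \<subseteq> {0..<n}" and p: "set p \<subseteq> {0..<n}"
    using Cons.prems by auto
  have prod: "gam_word n A [a] \<otimes>\<^bsub>Gam n A\<^esub> gam_word n A p = gam_word n A (a # p)"
    using gam_word_append[OF a p] by simp
  have "{(h1, h2). h1 \<in> carrier (Gam n A) \<and> h2 \<in> carrier (Gam n A)
       \<and> ufund n A a b \<sigma> h1 \<noteq> 0 \<and> utens n A p i \<sigma> h2 \<noteq> 0 \<and> h1 \<otimes>\<^bsub>Gam n A\<^esub> h2 = g}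
    = (if g = gam_word n A (a # p) \<and> a # p = map \<sigma> (b # i)
       then {(gam_word n A [a], gam_word n A p)} else {})"
    using Cons.IH[OF p] gam_word_in_Gam[OF a] gam_word_in_Gam[OF p] prod
    by (auto simp: ufund_def gam_eq_gam_word)
  then show ?case
    using Cons.IH[OF p] by (simp add: utens_def amult_def ufund_def gam_eq_gam_word)
qed

end

unbundle no m_inv_syntax \<comment> \<open>from here on, inv is the inverse of a permutation\<close>

lemma Aut_permutes: "\<sigma> \<in> Aut n EG \<Longrightarrow> \<sigma> permutes {0..<n}"
  by (simp add: Aut_def)

lemma Aut_less_iff: "\<sigma> \<in> Aut n EG \<Longrightarrow> \<sigma> x < n \<longleftrightarrow> x < n"
  using permutes_in_image[OF Aut_permutes] by fastforce

lemma Aut_edge: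
  "EG \<subseteq> {0..<n} \<times> {0..<n} \<Longrightarrow> \<sigma> \<in> Aut n EG \<Longrightarrow> (x, y) \<in> EG \<Longrightarrow> (\<sigma> x, \<sigma> y) \<in> EG"
  unfolding Aut_def by auto

lemma id_in_Aut: "id \<in> Aut n EG"
  by (simp add: Aut_def permutes_id)

lemma inv_in_Aut:
  assumes "\<sigma> \<in> Aut n EG"
  shows "inv \<sigma> \<in> Aut n EG"
proof -
  have p: "\<sigma> permutes {0..<n}"
    using assms by (rule Aut_permutes)
  have ip: "inv \<sigma> permutes {0..<n}"
    by (rule permutes_inv[OF p])
  have "(x, y) \<in> EG \<longleftrightarrow> (inv \<sigma> x, inv \<sigma> y) \<in> EG" if "x < n" "y < n" for x y
  proof -
    have "inv \<sigma> x < n" "inv \<sigma> y < n"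
      using permutes_in_image[OF ip] that by auto
    then have "(inv \<sigma> x, inv \<sigma> y) \<in> EG \<longleftrightarrow> (\<sigma> (inv \<sigma> x), \<sigma> (inv \<sigma> y)) \<in> EG"
      using assms by (simp add: Aut_def)
    then show ?thesis
      by (simp add: permutes_inverses(1)[OF p])
  qed
  with ip show ?thesis
    by (simp add: Aut_def)
qed

lemma finite_Aut: "finite (Aut n EG)"
  by (rule finite_subset[of _ "{p. p permutes {0..<n}}"]) (auto simp: Aut_def finite_permutations)

lemma Aut_inv_comp:
  "\<sigma> \<in> Aut n EG \<Longrightarrow> inv \<sigma> \<circ> \<sigma> = id"
  "\<sigma> \<in> Aut n EG \<Longrightarrow> \<sigma> \<circ> inv \<sigma> = id"
  using permutes_inv_o[OF Aut_permutes] by blast+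

lemma finite_idx: "finite (idx n k)"
  using finite_lists_length_eq[of "{0..<n}" k] by (simp add: idx_def conj_commute)

lemma set_idx: "i \<in> idx n k \<Longrightarrow> set i \<subseteq> {0..<n}"
  by (simp add: idx_def)

lemma map_in_idx_iff: "\<sigma> \<in> Aut n EG \<Longrightarrow> map \<sigma> i \<in> idx n k \<longleftrightarrow> i \<in> idx n k"
  unfolding idx_def using Aut_less_iff[of \<sigma>] by auto

section \<open>The intertwiners of u\<close>

definition invariant_matrix ::
  "nat \<Rightarrow> (nat \<times> nat) set \<Rightarrow> nat list set \<Rightarrow> nat \<Rightarrow> nat \<Rightarrow> (nat list \<Rightarrow> nat list \<Rightarrow> complex) \<Rightarrow> bool"
  where
  "invariant_matrix n EG A k l T \<longleftrightarrow>
     (\<forall>j i. T j i \<noteq> 0 \<longrightarrow> j \<in> idx n l \<and> i \<in> idx n k \<and> gam_word n A i = gam_word n A j)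
   \<and> (\<forall>\<sigma>\<in>Aut n EG. \<forall>j i. T (map \<sigma> j) (map \<sigma> i) = T j i)"

lemma if_eq_if_iff:
  assumes "a \<in> S" "b \<in> S"
  shows "(\<forall>g\<in>S. (if g = a then x else 0) = (if g = b then y else 0)) \<longleftrightarrow>
    x = y \<and> (x \<noteq> (0::'a::zero) \<longrightarrow> a = b)"
proof
  assume eq: "\<forall>g\<in>S. (if g = a then x else 0) = (if g = b then y else 0)"
  show "x = y \<and> (x \<noteq> 0 \<longrightarrow> a = b)"
    using eq[rule_format, OF assms(1)] eq[rule_format, OF assms(2)] by (cases "a = b") auto
qed auto

context
  fixes n A
  assumes normal: "normal A (Z2free n)"
begin

lemma sum_mult_utens:
  assumes "\<sigma> \<in> Aut n EG" "i \<in> idx n k"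
  shows "(\<Sum>p\<in>idx n k. T j p * utens n A p i \<sigma> g) =
    (if g = gam_word n A (map \<sigma> i) then T j (map \<sigma> i) else 0)"
proof -
  have "(\<Sum>p\<in>idx n k. T j p * utens n A p i \<sigma> g) =
      (\<Sum>p\<in>idx n k. if map \<sigma> i = p then (if g = gam_word n A p then T j p else 0) else 0)"
    using assms(2) by (intro sum.cong refl) (auto simp: utens_apply[OF normal] idx_def)
  also have "\<dots> = (if g = gam_word n A (map \<sigma> i) then T j (map \<sigma> i) else 0)"
    using assms by (simp add: finite_idx map_in_idx_iff)
  finally show ?thesis .
qed

lemma sum_utens_mult:
  assumes "\<sigma> \<in> Aut n EG" "j \<in> idx n l"
  shows "(\<Sum>q\<in>idx n l. utens n A j q \<sigma> g * T q i) =
    (if g = gam_word n A j then T (map (inv \<sigma>) j) i else 0)"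
proof -
  have "(\<Sum>q\<in>idx n l. utens n A j q \<sigma> g * T q i) =
      (\<Sum>q\<in>idx n l. if map (inv \<sigma>) j = q then (if g = gam_word n A j then T q i else 0) else 0)"
    using assms by (intro sum.cong refl) (auto simp: utens_apply[OF normal] idx_def Aut_inv_comp)
  also have "\<dots> = (if g = gam_word n A j then T (map (inv \<sigma>) j) i else 0)"
    using assms map_in_idx_iff[OF inv_in_Aut[OF assms(1)]] by (simp add: finite_idx)
  finally show ?thesis .
qed

lemma Mor_iff:
  "T \<in> Mor n EG A k l \<longleftrightarrow> (\<forall>j i. \<not> (j \<in> idx n l \<and> i \<in> idx n k) \<longrightarrow> T j i = 0)
     \<and> (\<forall>j\<in>idx n l. \<forall>i\<in>idx n k. \<forall>\<sigma>\<in>Aut n EG. T j (map \<sigma> i) = T (map (inv \<sigma>) j) i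
          \<and> (T j (map \<sigma> i) \<noteq> 0 \<longrightarrow> gam_word n A (map \<sigma> i) = gam_word n A j))"
  unfolding Mor_def mem_Collect_eq
proof (intro conj_cong refl ball_cong)
  fix j i \<sigma>
  assume j: "j \<in> idx n l" and i: "i \<in> idx n k" and \<sigma>: "\<sigma> \<in> Aut n EG"
  have "map \<sigma> i \<in> idx n k"
    using i \<sigma> by (simp add: map_in_idx_iff)
  then have a: "gam_word n A (map \<sigma> i) \<in> carrier (Gam n A)"
    by (rule gam_word_in_Gam[OF normal set_idx])
  have b: "gam_word n A j \<in> carrier (Gam n A)"
    using j by (simp add: set_idx gam_word_in_Gam[OF normal])
  show "(\<forall>g\<in>carrier (Gam n A). (\<Sum>p\<in>idx n k. T j p * utens n A p i \<sigma> g)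
        = (\<Sum>q\<in>idx n l. utens n A j q \<sigma> g * T q i))
      \<longleftrightarrow> T j (map \<sigma> i) = T (map (inv \<sigma>) j) i
        \<and> (T j (map \<sigma> i) \<noteq> 0 \<longrightarrow> gam_word n A (map \<sigma> i) = gam_word n A j)"
    by (simp only: sum_mult_utens[OF \<sigma> i] sum_utens_mult[OF \<sigma> j]
        if_eq_if_iff[OF a b])
qed

lemma invariant_matrix_if_Mor:
  assumes "T \<in> Mor n EG A k l"
  shows "invariant_matrix n EG A k l T"
proof -
  have supp: "\<And>j i. T j i \<noteq> 0 \<Longrightarrow> j \<in> idx n l \<and> i \<in> idx n k"
    and comm: "\<And>j i \<sigma>. j \<in> idx n l \<Longrightarrow> i \<in> idx n k \<Longrightarrow> \<sigma> \<in> Aut n EG \<Longrightarrow>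
       T j (map \<sigma> i) = T (map (inv \<sigma>) j) i
       \<and> (T j (map \<sigma> i) \<noteq> 0 \<longrightarrow> gam_word n A (map \<sigma> i) = gam_word n A j)"
    using assms unfolding Mor_iff by blast+
  have "gam_word n A i = gam_word n A j" if "T j i \<noteq> 0" for j i
    using comm[of j i id] supp[OF that] that by (simp add: id_in_Aut)
  moreover have "T (map \<sigma> j) (map \<sigma> i) = T j i" if \<sigma>: "\<sigma> \<in> Aut n EG" for \<sigma> j i
  proof (cases "j \<in> idx n l \<and> i \<in> idx n k")
    case True
    then show ?thesis
      using comm[of "map \<sigma> j" i \<sigma>] \<sigma> by (simp add: Aut_inv_comp map_in_idx_iff)
  next
    case False
    then have "T j i = 0" "T (map \<sigma> j) (map \<sigma> i) = 0"
      using supp[of j i] supp[of "map \<sigma> j" "map \<sigma> i"] \<sigma> by (auto simp: map_in_idx_iff)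
    then show ?thesis
      by simp
  qed
  ultimately show ?thesis
    using supp by (simp add: invariant_matrix_def)
qed

lemma Mor_if_invariant_matrix:
  assumes "invariant_matrix n EG A k l T"
  shows "T \<in> Mor n EG A k l"
proof -
  have supp: "\<And>j i. T j i \<noteq> 0 \<Longrightarrow> j \<in> idx n l \<and> i \<in> idx n k \<and> gam_word n A i = gam_word n A j"
    and inv: "\<And>\<sigma> j i. \<sigma> \<in> Aut n EG \<Longrightarrow> T (map \<sigma> j) (map \<sigma> i) = T j i"
    using assms unfolding invariant_matrix_def by blast+
  have "T j (map \<sigma> i) = T (map (inv \<sigma>) j) i" if "\<sigma> \<in> Aut n EG" for \<sigma> j i
    using inv[OF that, of "map (inv \<sigma>) j" i] by (simp add: Aut_inv_comp[OF that])
  then show ?thesis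
    unfolding Mor_iff using supp by blast
qed

end

section \<open>The graph category of A\<close>

definition graph_hom :: "nat \<Rightarrow> (nat \<times> nat) set \<Rightarrow> bgraph \<Rightarrow> (nat \<Rightarrow> nat) \<Rightarrow> bool" where
  "graph_hom n EG K \<phi> \<longleftrightarrow> (\<forall>x\<in>bV K. \<phi> x < n) \<and> (\<forall>(x, y)\<in>bE K. (\<phi> x, \<phi> y) \<in> EG)"

definition Gam_category :: "nat \<Rightarrow> (nat \<times> nat) set \<Rightarrow> nat list set \<Rightarrow> bgraph set" where
  "Gam_category n EG A = {K. wf_bg K \<and> (\<forall>\<phi>. graph_hom n EG K \<phi> \<longrightarrow>
     gam_word n A (map \<phi> (bin K)) = gam_word n A (map \<phi> (bout K)))}"

lemma Gam_categoryI:
  "wf_bg K \<Longrightarrow> (\<And>\<phi>. graph_hom n EG K \<phi> \<Longrightarrow>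
     gam_word n A (map \<phi> (bin K)) = gam_word n A (map \<phi> (bout K))) \<Longrightarrow> K \<in> Gam_category n EG A"
  by (simp add: Gam_category_def)

lemma Gam_categoryD:
  "K \<in> Gam_category n EG A \<Longrightarrow> wf_bg K"
  "K \<in> Gam_category n EG A \<Longrightarrow> graph_hom n EG K \<phi> \<Longrightarrow>
     gam_word n A (map \<phi> (bin K)) = gam_word n A (map \<phi> (bout K))"
  by (simp_all add: Gam_category_def)

lemma graph_hom_labels:
  assumes "wf_bg K" "graph_hom n EG K \<phi>"
  shows "set (map \<phi> (bin K)) \<subseteq> {0..<n}" "set (map \<phi> (bout K)) \<subseteq> {0..<n}"
  using assms unfolding wf_bg_def graph_hom_def by auto

lemma wf_bg_quot: "wf_bg K \<Longrightarrow> wf_bg (bg_quot K P)"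
  unfolding wf_bg_def bg_quot_def sym_def by (auto 0 3)

lemma wf_bg_tensor: "wf_bg K \<Longrightarrow> wf_bg H \<Longrightarrow> wf_bg (tensor K H)"
  unfolding wf_bg_def tensor_def sym_def by (auto 0 3)

lemma wf_bg_relabel:
  "wf_bg K \<Longrightarrow> set a \<subseteq> bV K \<Longrightarrow> set b \<subseteq> bV K \<Longrightarrow> wf_bg (K\<lparr>bin := a, bout := b\<rparr>)"
  by (simp add: wf_bg_def)

lemma graph_hom_quot: "graph_hom n EG (bg_quot K P) \<phi> \<Longrightarrow> graph_hom n EG K (\<phi> \<circ> qmap P)"
  unfolding graph_hom_def bg_quot_def by auto

lemma graph_hom_tensor:
  assumes "graph_hom n EG (tensor K H) \<phi>"
  shows "graph_hom n EG K (\<lambda>x. \<phi> (2 * x))" "graph_hom n EG H (\<lambda>x. \<phi> (2 * x + 1))"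
  using assms unfolding graph_hom_def tensor_def by auto

lemma qmap_quotient_eq:
  assumes R: "equiv X R" and ab: "(a, b) \<in> R"
  shows "qmap (X // R) a = qmap (X // R) b"
proof -
  have "qblock (X // R) x = R `` {x}" if x: "x \<in> X" for x
    unfolding qblock_def
  proof (rule the_equality)
    show "R `` {x} \<in> X // R \<and> x \<in> R `` {x}"
      using quotientI[OF x] equiv_class_self[OF R x] by blast
  next
    fix B
    assume "B \<in> X // R \<and> x \<in> B"
    then show "B = R `` {x}"
      using R by (metis quotient_eq_iff quotientI x equiv_class_self)
  qed
  moreover have "a \<in> X" "b \<in> X" "R `` {a} = R `` {b}"
    using R ab equiv_class_eq_iff[OF R] by (auto dest: equiv_type)
  ultimately show ?thesis
    by (simp add: qmap_def)
qed

definition glue_rel :: "bgraph \<Rightarrow> bgraph \<Rightarrow> (nat \<times> nat) set" where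
  "glue_rel K H = (let S = {(2 * (bout K ! i), 2 * (bin H ! i) + 1) | i. i < length (bout K)}
     in (S \<union> S\<inverse>)\<^sup>* \<inter> (bV (tensor K H) \<times> bV (tensor K H)))"

lemma compose_eq_bg_quot:
  "compose H K = bg_quot ((tensor K H)\<lparr>bin := map (\<lambda>x. 2 * x) (bin K), bout := map (\<lambda>x. 2 * x + 1) (bout H)\<rparr>)
     (bV (tensor K H) // glue_rel K H)"
  by (simp add: compose_def glue_rel_def Let_def)

lemma equiv_glue_rel: "equiv (bV (tensor K H)) (glue_rel K H)"
  unfolding glue_rel_def Let_def
  by (intro equivI refl_onI symI transI)
    (auto intro: rtrancl_trans sym_rtrancl[OF sym_Un_converse, THEN symD])

lemma glue_rel_glued:
  assumes K: "wf_bg K" and H: "wf_bg H" and len: "length (bout K) = length (bin H)"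
    and i: "i < length (bout K)"
  shows "(2 * (bout K ! i), 2 * (bin H ! i) + 1) \<in> glue_rel K H"
proof -
  have "bout K ! i \<in> bV K" "bin H ! i \<in> bV H"
    using K H len i nth_mem unfolding wf_bg_def by (metis subsetD)+
  then have "2 * (bout K ! i) \<in> bV (tensor K H)" "2 * (bin H ! i) + 1 \<in> bV (tensor K H)"
    by (simp_all add: tensor_def)
  with i show ?thesis
    unfolding glue_rel_def Let_def by blast
qed

lemma wf_bg_compose:
  assumes K: "wf_bg K" and H: "wf_bg H"
  shows "wf_bg (compose H K)"
proof -
  have "set (map (\<lambda>x. 2 * x) (bin K)) \<subseteq> bV (tensor K H)"
    "set (map (\<lambda>x. 2 * x + 1) (bout H)) \<subseteq> bV (tensor K H)"
    using K H unfolding wf_bg_def tensor_def by auto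
  then show ?thesis
    unfolding compose_eq_bg_quot by (intro wf_bg_quot wf_bg_relabel wf_bg_tensor K H)
qed

lemma graph_hom_compose:
  assumes K: "wf_bg K" and H: "wf_bg H" and len: "length (bout K) = length (bin H)"
    and hom: "graph_hom n EG (compose H K) \<phi>"
  obtains \<phi>K \<phi>H where "graph_hom n EG K \<phi>K" "graph_hom n EG H \<phi>H"
    "map \<phi> (bin (compose H K)) = map \<phi>K (bin K)" "map \<phi> (bout (compose H K)) = map \<phi>H (bout H)"
    "map \<phi>K (bout K) = map \<phi>H (bin H)"
proof -
  define \<psi> where "\<psi> = \<phi> \<circ> qmap (bV (tensor K H) // glue_rel K H)"
  have "graph_hom n EG (tensor K H) \<psi>"
    using graph_hom_quot hom unfolding compose_eq_bg_quot \<psi>_def graph_hom_def by fastforce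
  then have "graph_hom n EG K (\<lambda>x. \<psi> (2 * x))" "graph_hom n EG H (\<lambda>x. \<psi> (2 * x + 1))"
    by (rule graph_hom_tensor)+
  moreover have "map \<phi> (bin (compose H K)) = map (\<lambda>x. \<psi> (2 * x)) (bin K)"
    "map \<phi> (bout (compose H K)) = map (\<lambda>x. \<psi> (2 * x + 1)) (bout H)"
    unfolding compose_eq_bg_quot by (simp_all add: bg_quot_def \<psi>_def)
  moreover have "\<psi> (2 * (bout K ! i)) = \<psi> (2 * (bin H ! i) + 1)" if "i < length (bout K)" for i
    unfolding \<psi>_def using qmap_quotient_eq[OF equiv_glue_rel glue_rel_glued[OF K H len that]] by simp
  then have "map (\<lambda>x. \<psi> (2 * x)) (bout K) = map (\<lambda>x. \<psi> (2 * x + 1)) (bin H)"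
    using len by (intro nth_equalityI) simp_all
  ultimately show ?thesis
    by (rule that)
qed

context
  fixes n :: nat and EG :: "(nat \<times> nat) set" and A :: "nat list set"
  assumes normal: "normal A (Z2free n)"
begin

lemma Gam_category_tensor:
  assumes K: "K \<in> Gam_category n EG A" and H: "H \<in> Gam_category n EG A"
  shows "tensor K H \<in> Gam_category n EG A"
proof (rule Gam_categoryI)
  show "wf_bg (tensor K H)"
    using K H by (simp add: Gam_categoryD wf_bg_tensor)
next
  fix \<phi>
  assume "graph_hom n EG (tensor K H) \<phi>"
  note hom = graph_hom_tensor[OF this]
  have "map \<phi> (bin (tensor K H)) = map (\<lambda>x. \<phi> (2 * x)) (bin K) @ map (\<lambda>x. \<phi> (2 * x + 1)) (bin H)"
    "map \<phi> (bout (tensor K H)) = map (\<lambda>x. \<phi> (2 * x)) (bout K) @ map (\<lambda>x. \<phi> (2 * x + 1)) (bout H)"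
    by (simp_all add: tensor_def)
  then show "gam_word n A (map \<phi> (bin (tensor K H))) = gam_word n A (map \<phi> (bout (tensor K H)))"
    using K H hom graph_hom_labels[OF Gam_categoryD(1)[OF K] hom(1)]
      graph_hom_labels[OF Gam_categoryD(1)[OF H] hom(2)]
    by (simp add: gam_word_append[OF normal] Gam_categoryD(2))
qed

lemma Gam_category_compose:
  assumes K: "K \<in> Gam_category n EG A" and H: "H \<in> Gam_category n EG A"
    and len: "length (bout K) = length (bin H)"
  shows "compose H K \<in> Gam_category n EG A"
proof (rule Gam_categoryI)
  show "wf_bg (compose H K)"
    using K H by (simp add: Gam_categoryD wf_bg_compose)
next
  fix \<phi>
  assume "graph_hom n EG (compose H K) \<phi>"
  from graph_hom_compose[OF Gam_categoryD(1)[OF K] Gam_categoryD(1)[OF H] len this]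
  obtain \<phi>K \<phi>H where "graph_hom n EG K \<phi>K" "graph_hom n EG H \<phi>H"
    "map \<phi> (bin (compose H K)) = map \<phi>K (bin K)" "map \<phi> (bout (compose H K)) = map \<phi>H (bout H)"
    "map \<phi>K (bout K) = map \<phi>H (bin H)" .
  then show "gam_word n A (map \<phi> (bin (compose H K))) = gam_word n A (map \<phi> (bout (compose H K)))"
    using K H by (simp add: Gam_categoryD(2))
qed

end

lemma Gam_category_quot: "K \<in> Gam_category n EG A \<Longrightarrow> bg_quot K P \<in> Gam_category n EG A"
  unfolding Gam_category_def using wf_bg_quot graph_hom_quot by (fastforce simp: bg_quot_def)

lemma Gam_category_involution: "K \<in> Gam_category n EG A \<Longrightarrow> involution K \<in> Gam_category n EG A"
  unfolding Gam_category_def involution_def wf_bg_def graph_hom_def by auto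

lemma Gam_category_iso:
  assumes K: "K \<in> Gam_category n EG A" and K': "wf_bg K'" and iso: "bg_iso K K'"
  shows "K' \<in> Gam_category n EG A"
proof (rule Gam_categoryI[OF K'])
  obtain f where f: "bij_betw f (bV K) (bV K')"
     "\<forall>x\<in>bV K. \<forall>y\<in>bV K. (x, y) \<in> bE K \<longleftrightarrow> (f x, f y) \<in> bE K'"
     "map f (bin K) = bin K'" "map f (bout K) = bout K'"
    using iso unfolding bg_iso_def by blast
  fix \<phi>
  assume hom: "graph_hom n EG K' \<phi>"
  have "f x \<in> bV K'" if "x \<in> bV K" for x
    using f(1) that by (rule bij_betw_apply)
  moreover have "(f x, f y) \<in> bE K'" if "(x, y) \<in> bE K" for x y
    using f(2) that Gam_categoryD(1)[OF K] unfolding wf_bg_def by blast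
  ultimately have "graph_hom n EG K (\<phi> \<circ> f)"
    using hom unfolding graph_hom_def by fastforce
  then have "gam_word n A (map (\<phi> \<circ> f) (bin K)) = gam_word n A (map (\<phi> \<circ> f) (bout K))"
    using K by (simp add: Gam_categoryD(2))
  then show "gam_word n A (map \<phi> (bin K')) = gam_word n A (map \<phi> (bout K'))"
    by (simp flip: f(3,4))
qed

lemma Gam_category_units: "N0 \<in> Gam_category n EG A" "Mid \<in> Gam_category n EG A" "Mpair \<in> Gam_category n EG A"
  by (simp_all add: Gam_category_def N0_def Mid_def Mpair_def wf_bg_def gam_word_double)

lemma Gam_category_group_theoretical:
  assumes "normal A (Z2free n)"
  shows "group_theoretical (Gam_category n EG A)"
  unfolding group_theoretical_def graph_category_def
proof (intro conjI ballI allI impI)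
  fix K H
  assume K: "K \<in> Gam_category n EG A" and H: "H \<in> Gam_category n EG A"
  show "tensor K H \<in> Gam_category n EG A"
    using K H by (rule Gam_category_tensor[OF assms])
  show "length (bout K) = length (bin H) \<Longrightarrow> compose H K \<in> Gam_category n EG A"
    using K H by (rule Gam_category_compose[OF assms])
next
  fix K K'
  assume "K \<in> Gam_category n EG A" "wf_bg K' \<and> bg_iso K K'"
  then show "K' \<in> Gam_category n EG A"
    using Gam_category_iso by blast
next
  fix K
  assume K: "K \<in> Gam_category n EG A"
  show "wf_bg K"
    using K by (rule Gam_categoryD(1))
  show "involution K \<in> Gam_category n EG A"
    using K by (rule Gam_category_involution)
  show "bg_quot K P \<in> Gam_category n EG A" if "partition_on (bV K) P" for P
    using K by (rule Gam_category_quot)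
qed (rule Gam_category_units)+

section \<open>Matrices of graphs in the category are intertwiners\<close>

definition inj_homs :: "nat \<Rightarrow> (nat \<times> nat) set \<Rightarrow> bgraph \<Rightarrow> nat list \<Rightarrow> nat list \<Rightarrow> (nat \<Rightarrow> nat) set" where
  "inj_homs n EG K j i = {\<phi> \<in> bV K \<rightarrow>\<^sub>E {0..<n}. inj_on \<phi> (bV K)
      \<and> (\<forall>(x, y)\<in>bE K. (\<phi> x, \<phi> y) \<in> EG) \<and> map \<phi> (bin K) = i \<and> map \<phi> (bout K) = j}"

lemma hatT_eq_card: "hatT n EG K j i = of_nat (card (inj_homs n EG K j i))"
  by (simp add: hatT_def inj_homs_def)

lemma finite_inj_homs: "finite (bV K) \<Longrightarrow> finite (inj_homs n EG K j i)"
  by (rule finite_subset[of _ "bV K \<rightarrow>\<^sub>E {0..<n}"]) (auto simp: inj_homs_def finite_PiE)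

lemma hatT_nonzero:
  assumes K: "K \<in> Gam_category n EG A" and nz: "hatT n EG K j i \<noteq> 0"
  shows "j \<in> idx n (length (bout K)) \<and> i \<in> idx n (length (bin K)) \<and> gam_word n A i = gam_word n A j"
proof -
  obtain \<phi> where \<phi>: "\<phi> \<in> inj_homs n EG K j i"
    using nz by (fastforce simp: hatT_eq_card)
  then have hom: "graph_hom n EG K \<phi>" and "map \<phi> (bin K) = i" "map \<phi> (bout K) = j"
    by (auto simp: inj_homs_def graph_hom_def)
  then show ?thesis
    using graph_hom_labels[OF Gam_categoryD(1)[OF K] hom] Gam_categoryD(2)[OF K hom]
    by (auto simp: idx_def)
qed

lemma Aut_comp_in_inj_homs:
  assumes EG: "EG \<subseteq> {0..<n} \<times> {0..<n}" and \<sigma>: "\<sigma> \<in> Aut n EG" and K: "wf_bg K"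
    and \<phi>: "\<phi> \<in> inj_homs n EG K j i"
  shows "restrict (\<sigma> \<circ> \<phi>) (bV K) \<in> inj_homs n EG K (map \<sigma> j) (map \<sigma> i)"
proof -
  let ?\<psi> = "restrict (\<sigma> \<circ> \<phi>) (bV K)"
  have \<phi>V: "\<phi> \<in> bV K \<rightarrow>\<^sub>E {0..<n}" and inj: "inj_on \<phi> (bV K)"
    and edges: "\<forall>(x, y)\<in>bE K. (\<phi> x, \<phi> y) \<in> EG"
    and labels: "map \<phi> (bin K) = i" "map \<phi> (bout K) = j"
    using \<phi> by (simp_all add: inj_homs_def)
  have wf: "set (bin K) \<subseteq> bV K" "set (bout K) \<subseteq> bV K" "bE K \<subseteq> bV K \<times> bV K"
    using K by (auto simp: wf_bg_def)
  have "?\<psi> \<in> bV K \<rightarrow>\<^sub>E {0..<n}"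
    using \<phi>V Aut_less_iff[OF \<sigma>] by (auto simp: restrict_PiE_iff)
  moreover have "inj_on ?\<psi> (bV K)"
    using comp_inj_on[OF inj inj_on_subset[OF permutes_inj[OF Aut_permutes[OF \<sigma>]]]]
    by (simp add: inj_on_def)
  moreover have "\<forall>(x, y)\<in>bE K. (?\<psi> x, ?\<psi> y) \<in> EG"
  proof (intro ballI, clarify)
    fix x y
    assume xy: "(x, y) \<in> bE K"
    then have "x \<in> bV K" "y \<in> bV K" "(\<phi> x, \<phi> y) \<in> EG"
      using wf(3) edges by auto
    then show "(?\<psi> x, ?\<psi> y) \<in> EG"
      using Aut_edge[OF EG \<sigma>] by simp
  qed
  moreover have "map ?\<psi> (bin K) = map \<sigma> i" "map ?\<psi> (bout K) = map \<sigma> j"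
    using wf(1,2) by (auto simp flip: labels)
  ultimately show ?thesis
    unfolding inj_homs_def by blast
qed

lemma card_inj_homs_le:
  assumes EG: "EG \<subseteq> {0..<n} \<times> {0..<n}" and \<sigma>: "\<sigma> \<in> Aut n EG" and K: "wf_bg K"
  shows "card (inj_homs n EG K j i) \<le> card (inj_homs n EG K (map \<sigma> j) (map \<sigma> i))"
proof (rule card_inj_on_le)
  show "inj_on (\<lambda>\<phi>. restrict (\<sigma> \<circ> \<phi>) (bV K)) (inj_homs n EG K j i)"
  proof (rule inj_onI)
    fix \<phi> \<phi>'
    assume "\<phi> \<in> inj_homs n EG K j i" "\<phi>' \<in> inj_homs n EG K j i"
    then have ext: "\<phi> \<in> extensional (bV K)" "\<phi>' \<in> extensional (bV K)"
      by (auto simp: inj_homs_def PiE_def)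
    assume "restrict (\<sigma> \<circ> \<phi>) (bV K) = restrict (\<sigma> \<circ> \<phi>') (bV K)"
    then have "\<sigma> (\<phi> x) = \<sigma> (\<phi>' x)" if "x \<in> bV K" for x
      using that by (metis comp_apply restrict_apply')
    then show "\<phi> = \<phi>'"
      using permutes_inj[OF Aut_permutes[OF \<sigma>]] by (intro extensionalityI[OF ext]) (simp add: inj_eq)
  qed
  show "(\<lambda>\<phi>. restrict (\<sigma> \<circ> \<phi>) (bV K)) ` inj_homs n EG K j i \<subseteq> inj_homs n EG K (map \<sigma> j) (map \<sigma> i)"
    using Aut_comp_in_inj_homs[OF EG \<sigma> K] by blast
  show "finite (inj_homs n EG K (map \<sigma> j) (map \<sigma> i))"
    using K by (simp add: wf_bg_def finite_inj_homs)
qed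

lemma hatT_Aut_invariant:
  assumes EG: "EG \<subseteq> {0..<n} \<times> {0..<n}" and \<sigma>: "\<sigma> \<in> Aut n EG" and K: "wf_bg K"
  shows "hatT n EG K (map \<sigma> j) (map \<sigma> i) = hatT n EG K j i"
proof -
  have "card (inj_homs n EG K (map \<sigma> j) (map \<sigma> i))
      \<le> card (inj_homs n EG K (map (inv \<sigma>) (map \<sigma> j)) (map (inv \<sigma>) (map \<sigma> i)))"
    by (rule card_inj_homs_le[OF EG inv_in_Aut[OF \<sigma>] K])
  then show ?thesis
    using card_inj_homs_le[OF EG \<sigma> K, of j i] by (simp add: hatT_eq_card Aut_inv_comp[OF \<sigma>])
qed

lemma invariant_matrix_hatT:
  assumes "EG \<subseteq> {0..<n} \<times> {0..<n}" "K \<in> Gam_category n EG A"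
  shows "invariant_matrix n EG A (length (bin K)) (length (bout K)) (hatT n EG K)"
  unfolding invariant_matrix_def
proof (rule conjI; intro allI ballI impI)
  fix j i
  assume "hatT n EG K j i \<noteq> 0"
  then show "j \<in> idx n (length (bout K)) \<and> i \<in> idx n (length (bin K))
      \<and> gam_word n A i = gam_word n A j"
    by (rule hatT_nonzero[OF assms(2)])
next
  fix \<sigma> j i
  assume "\<sigma> \<in> Aut n EG"
  then show "hatT n EG K (map \<sigma> j) (map \<sigma> i) = hatT n EG K j i"
    by (rule hatT_Aut_invariant[OF assms(1) _ Gam_categoryD(1)[OF assms(2)]])
qed

lemma invariant_matrix_lin_comb:
  assumes "finite F" "\<forall>X\<in>F. invariant_matrix n EG A k l X"
  shows "invariant_matrix n EG A k l (\<lambda>j i. \<Sum>X\<in>F. c X * X j i)"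
  unfolding invariant_matrix_def
proof (rule conjI; intro allI ballI impI)
  fix j i
  assume "(\<Sum>X\<in>F. c X * X j i) \<noteq> 0"
  then obtain X where "X \<in> F" "c X * X j i \<noteq> 0"
    by (rule sum.not_neutral_contains_not_neutral)
  then show "j \<in> idx n l \<and> i \<in> idx n k \<and> gam_word n A i = gam_word n A j"
    using assms(2) by (auto simp: invariant_matrix_def)
next
  fix \<sigma> j i
  assume "\<sigma> \<in> Aut n EG"
  then show "(\<Sum>X\<in>F. c X * X (map \<sigma> j) (map \<sigma> i)) = (\<Sum>X\<in>F. c X * X j i)"
    using assms(2) by (intro sum.cong refl) (auto simp: invariant_matrix_def)
qed

lemma CG_subset_Mor:
  assumes "normal A (Z2free n)" "EG \<subseteq> {0..<n} \<times> {0..<n}"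
  shows "CG n EG (Gam_category n EG A) k l \<subseteq> Mor n EG A k l"
proof
  fix T
  assume "T \<in> CG n EG (Gam_category n EG A) k l"
  then obtain F c where F: "finite F"
      "F \<subseteq> {hatT n EG K | K. K \<in> Gam_category n EG A \<and> length (bin K) = k \<and> length (bout K) = l}"
    and T: "T = (\<lambda>j i. \<Sum>X\<in>F. c X * X j i)"
    unfolding CG_def lin_span_def by blast
  have "\<forall>X\<in>F. invariant_matrix n EG A k l X"
    using F(2) invariant_matrix_hatT[OF assms(2)] by blast
  then show "T \<in> Mor n EG A k l"
    unfolding T by (intro Mor_if_invariant_matrix[OF assms(1)] invariant_matrix_lin_comb F(1))
qed

section \<open>Every intertwiner is spanned by graphs of the category\<close>

definition labelled_G :: "nat \<Rightarrow> (nat \<times> nat) set \<Rightarrow> nat list \<Rightarrow> nat list \<Rightarrow> bgraph" where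
  "labelled_G n EG i j = \<lparr>bV = {0..<n}, bE = EG, bin = i, bout = j\<rparr>"

lemma labelled_G_in_Gam_category:
  assumes EG: "EG \<subseteq> {0..<n} \<times> {0..<n}" "sym EG" and normal: "normal A (Z2free n)"
    and inv: "End_invariant n EG A"
    and i: "set i \<subseteq> {0..<n}" and j: "set j \<subseteq> {0..<n}" and eq: "gam_word n A i = gam_word n A j"
  shows "labelled_G n EG i j \<in> Gam_category n EG A"
proof (rule Gam_categoryI)
  show "wf_bg (labelled_G n EG i j)"
    using EG i j by (auto simp: wf_bg_def labelled_G_def)
next
  fix \<phi>
  assume "graph_hom n EG (labelled_G n EG i j) \<phi>"
  then have "\<forall>x<n. \<phi> x < n" "\<forall>(x, y)\<in>EG. (\<phi> x, \<phi> y) \<in> EG"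
    by (auto simp: graph_hom_def labelled_G_def)
  then show "gam_word n A (map \<phi> (bin (labelled_G n EG i j))) =
      gam_word n A (map \<phi> (bout (labelled_G n EG i j)))"
    using gam_word_map[OF normal inv _ _ i j eq] by (simp add: labelled_G_def)
qed

text \<open>By finiteness, an injective endomorphism of G is onto on vertices and also on edges;
  the latter gives the reflection of edges required of an automorphism.\<close>

lemma inj_endo_in_Aut:
  assumes EG: "EG \<subseteq> {0..<n} \<times> {0..<n}" and range: "\<phi> ` {0..<n} \<subseteq> {0..<n}"
    and inj: "inj_on \<phi> {0..<n}" and edges: "\<forall>(x, y)\<in>EG. (\<phi> x, \<phi> y) \<in> EG"
  shows "(\<lambda>x. if x < n then \<phi> x else x) \<in> Aut n EG"
proof -
  define \<sigma> where "\<sigma> x = (if x < n then \<phi> x else x)" for x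
  have "bij_betw \<phi> {0..<n} {0..<n}"
    using endo_inj_surj[OF _ range inj] inj by (simp add: bij_betw_def)
  then have "bij_betw \<sigma> {0..<n} {0..<n}"
    by (rule bij_betw_cong[THEN iffD1, rotated]) (simp add: \<sigma>_def)
  then have perm: "\<sigma> permutes {0..<n}"
    by (rule bij_imp_permutes) (simp add: \<sigma>_def)
  have "inj_on (map_prod \<phi> \<phi>) EG"
    using map_prod_inj_on[OF inj inj] EG by (rule inj_on_subset)
  moreover have "map_prod \<phi> \<phi> ` EG \<subseteq> EG"
    using edges by auto
  moreover have "finite EG"
    using EG by (rule finite_subset) simp
  ultimately have edges_onto: "map_prod \<phi> \<phi> ` EG = EG"
    using endo_inj_surj by blast
  have "(x, y) \<in> EG \<longleftrightarrow> (\<sigma> x, \<sigma> y) \<in> EG" if "x < n" "y < n" for x y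
  proof
    assume "(\<sigma> x, \<sigma> y) \<in> EG"
    then have "(\<phi> x, \<phi> y) \<in> map_prod \<phi> \<phi> ` EG"
      using that edges_onto by (simp add: \<sigma>_def)
    then obtain a b where ab: "(a, b) \<in> EG" "\<phi> a = \<phi> x" "\<phi> b = \<phi> y"
      by auto
    moreover have "a < n" "b < n"
      using ab(1) EG by auto
    ultimately have "a = x" "b = y"
      using inj_onD[OF inj] that by auto
    then show "(x, y) \<in> EG"
      using ab(1) by simp
  qed (use edges that in \<open>auto simp: \<sigma>_def\<close>)
  with perm show ?thesis
    unfolding \<sigma>_def Aut_def by simp
qed

lemma inj_homs_labelled_GE:
  assumes EG: "EG \<subseteq> {0..<n} \<times> {0..<n}" and i: "set i \<subseteq> {0..<n}" and j: "set j \<subseteq> {0..<n}"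
    and "\<phi> \<in> inj_homs n EG (labelled_G n EG i j) j' i'"
  obtains \<sigma> where "\<sigma> \<in> Aut n EG" "map \<sigma> j = j'" "map \<sigma> i = i'" "restrict \<sigma> {0..<n} = \<phi>"
proof
  have \<phi>: "\<phi> \<in> {0..<n} \<rightarrow>\<^sub>E {0..<n}" "inj_on \<phi> {0..<n}" "\<forall>(x, y)\<in>EG. (\<phi> x, \<phi> y) \<in> EG"
    "map \<phi> i = i'" "map \<phi> j = j'"
    using assms(4) by (simp_all add: inj_homs_def labelled_G_def)
  define \<sigma> where "\<sigma> x = (if x < n then \<phi> x else x)" for x
  have "\<phi> ` {0..<n} \<subseteq> {0..<n}"
    using \<phi>(1) by (auto dest: PiE_mem)
  then show "\<sigma> \<in> Aut n EG"
    using inj_endo_in_Aut[OF EG _ \<phi>(2,3)] by (simp add: \<sigma>_def[abs_def])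
  show "map \<sigma> j = j'" "map \<sigma> i = i'"
    using \<phi>(4,5) i j unfolding map_eq_conv[symmetric] by (auto simp: \<sigma>_def subset_iff)
  show "restrict \<sigma> {0..<n} = \<phi>"
  proof
    fix x
    show "restrict \<sigma> {0..<n} x = \<phi> x"
      using PiE_arb[OF \<phi>(1), of x] by (simp add: \<sigma>_def)
  qed
qed

lemma restrict_Aut_in_inj_homs:
  assumes EG: "EG \<subseteq> {0..<n} \<times> {0..<n}" and \<sigma>: "\<sigma> \<in> Aut n EG"
    and i: "set i \<subseteq> {0..<n}" and j: "set j \<subseteq> {0..<n}"
  shows "restrict \<sigma> {0..<n} \<in> inj_homs n EG (labelled_G n EG i j) (map \<sigma> j) (map \<sigma> i)"
proof -
  let ?\<phi> = "restrict \<sigma> {0..<n}"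
  have "?\<phi> \<in> {0..<n} \<rightarrow>\<^sub>E {0..<n}"
    using Aut_less_iff[OF \<sigma>] by (simp add: restrict_PiE_iff)
  moreover have "inj_on ?\<phi> {0..<n}"
    unfolding inj_on_restrict_iff[OF subset_refl]
    using permutes_inj[OF Aut_permutes[OF \<sigma>]] by (rule inj_on_subset) simp
  moreover have "\<forall>(x, y)\<in>EG. (?\<phi> x, ?\<phi> y) \<in> EG"
  proof (intro ballI, clarify)
    fix x y
    assume xy: "(x, y) \<in> EG"
    then have "x < n" "y < n"
      using EG by auto
    then show "(?\<phi> x, ?\<phi> y) \<in> EG"
      using Aut_edge[OF EG \<sigma> xy] by simp
  qed
  moreover have "map ?\<phi> j = map \<sigma> j" "map ?\<phi> i = map \<sigma> i"
    using i j unfolding map_eq_conv by (auto simp: subset_iff)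
  ultimately show ?thesis
    by (simp add: inj_homs_def labelled_G_def)
qed

lemma inj_homs_labelled_G:
  assumes EG: "EG \<subseteq> {0..<n} \<times> {0..<n}" and i: "set i \<subseteq> {0..<n}" and j: "set j \<subseteq> {0..<n}"
  shows "inj_homs n EG (labelled_G n EG i j) j' i' =
    (\<lambda>\<sigma>. restrict \<sigma> {0..<n}) ` {\<sigma> \<in> Aut n EG. map \<sigma> j = j' \<and> map \<sigma> i = i'}"
proof (intro equalityI subsetI)
  fix \<phi>
  assume "\<phi> \<in> inj_homs n EG (labelled_G n EG i j) j' i'"
  then obtain \<sigma> where "\<sigma> \<in> Aut n EG" "map \<sigma> j = j'" "map \<sigma> i = i'" "restrict \<sigma> {0..<n} = \<phi>"
    by (rule inj_homs_labelled_GE[OF EG i j])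
  then show "\<phi> \<in> (\<lambda>\<sigma>. restrict \<sigma> {0..<n}) ` {\<sigma> \<in> Aut n EG. map \<sigma> j = j' \<and> map \<sigma> i = i'}"
    by (intro image_eqI[where x = \<sigma>]) auto
next
  fix \<phi>
  assume "\<phi> \<in> (\<lambda>\<sigma>. restrict \<sigma> {0..<n}) ` {\<sigma> \<in> Aut n EG. map \<sigma> j = j' \<and> map \<sigma> i = i'}"
  then obtain \<sigma> where \<sigma>: "\<sigma> \<in> Aut n EG" "map \<sigma> j = j'" "map \<sigma> i = i'" "\<phi> = restrict \<sigma> {0..<n}"
    by blast
  then show "\<phi> \<in> inj_homs n EG (labelled_G n EG i j) j' i'"
    using restrict_Aut_in_inj_homs[OF EG \<sigma>(1) i j] by simp
qed

lemma hatT_labelled_G: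
  assumes EG: "EG \<subseteq> {0..<n} \<times> {0..<n}" and i: "set i \<subseteq> {0..<n}" and j: "set j \<subseteq> {0..<n}"
  shows "hatT n EG (labelled_G n EG i j) j' i' =
    (\<Sum>\<sigma>\<in>Aut n EG. if map \<sigma> j = j' \<and> map \<sigma> i = i' then 1 else 0)"
proof -
  have "inj_on (\<lambda>\<sigma>. restrict \<sigma> {0..<n}) (Aut n EG)"
  proof (rule inj_onI)
    fix \<sigma> \<tau>
    assume \<sigma>: "\<sigma> \<in> Aut n EG" and \<tau>: "\<tau> \<in> Aut n EG"
      and eq: "restrict \<sigma> {0..<n} = restrict \<tau> {0..<n}"
    show "\<sigma> = \<tau>"
    proof
      fix x
      show "\<sigma> x = \<tau> x"
        using fun_cong[OF eq, of x] permutes_not_in[OF Aut_permutes[OF \<sigma>]]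
          permutes_not_in[OF Aut_permutes[OF \<tau>]]
        by (cases "x < n") auto
    qed
  qed
  then have "card (inj_homs n EG (labelled_G n EG i j) j' i') =
      card {\<sigma> \<in> Aut n EG. map \<sigma> j = j' \<and> map \<sigma> i = i'}"
    unfolding inj_homs_labelled_G[OF EG i j] by (rule card_image[OF inj_on_subset]) auto
  then show ?thesis
    by (simp add: hatT_eq_card sum.inter_filter[OF finite_Aut, symmetric])
qed

lemma lin_span_sum:
  assumes "finite I" "\<forall>a\<in>I. f a \<in> S"
  shows "(\<lambda>j i. \<Sum>a\<in>I. d a * f a j i) \<in> lin_span S"
proof -
  define c where "c X = (\<Sum>a\<in>{a \<in> I. f a = X}. d a)" for X
  have "(\<Sum>a\<in>I. d a * f a j i) = (\<Sum>X\<in>f ` I. c X * X j i)" for j i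
  proof -
    have "(\<Sum>a\<in>I. d a * f a j i) = (\<Sum>X\<in>f ` I. \<Sum>a\<in>{a \<in> I. f a = X}. d a * f a j i)"
      using assms(1) by (rule sum.image_gen)
    also have "\<dots> = (\<Sum>X\<in>f ` I. c X * X j i)"
      unfolding c_def sum_distrib_right by (intro sum.cong refl) auto
    finally show ?thesis .
  qed
  moreover have "finite (f ` I)" "f ` I \<subseteq> S"
    using assms by auto
  ultimately show ?thesis
    unfolding lin_span_def by blast
qed

lemma finite_support_invariant_matrix:
  "invariant_matrix n EG A k l T \<Longrightarrow> finite {(j, i). T j i \<noteq> 0}"
  unfolding invariant_matrix_def
  by (intro finite_subset[OF _ finite_cartesian_product[OF finite_idx finite_idx]]) auto

lemma invariant_matrix_sum_preimage:
  assumes T: "invariant_matrix n EG A k l T" and \<sigma>: "\<sigma> \<in> Aut n EG"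
  shows "(\<Sum>(j, i)\<in>{(j, i). T j i \<noteq> 0}. if map \<sigma> j = j' \<and> map \<sigma> i = i' then T j i else 0) = T j' i'"
proof -
  let ?x = "(map (inv \<sigma>) j', map (inv \<sigma>) i')"
  have "map \<sigma> (fst x) = j' \<and> map \<sigma> (snd x) = i' \<longleftrightarrow> x = ?x" for x
    using Aut_inv_comp[OF \<sigma>] by (cases x) auto
  then have "(\<Sum>(j, i)\<in>{(j, i). T j i \<noteq> 0}. if map \<sigma> j = j' \<and> map \<sigma> i = i' then T j i else 0) =
      (\<Sum>x\<in>{(j, i). T j i \<noteq> 0}. if x = ?x then T (fst x) (snd x) else 0)"
    unfolding split_def by (simp only:)
  also have "\<dots> = T (map (inv \<sigma>) j') (map (inv \<sigma>) i')"
    using finite_support_invariant_matrix[OF T] by (simp add: sum.delta)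
  also have "\<dots> = T (map \<sigma> (map (inv \<sigma>) j')) (map \<sigma> (map (inv \<sigma>) i'))"
    using T \<sigma> unfolding invariant_matrix_def by (simp del: map_map)
  also have "\<dots> = T j' i'"
    by (simp add: Aut_inv_comp[OF \<sigma>])
  finally show ?thesis .
qed

lemma invariant_matrix_average:
  assumes EG: "EG \<subseteq> {0..<n} \<times> {0..<n}" and T: "invariant_matrix n EG A k l T"
  shows "(\<Sum>(j, i)\<in>{(j, i). T j i \<noteq> 0}.
      T j i / of_nat (card (Aut n EG)) * hatT n EG (labelled_G n EG i j) j' i') = T j' i'"
proof -
  define I where "I = {(j, i). T j i \<noteq> 0}"
  define N where "N = (of_nat (card (Aut n EG)) :: complex)"
  have "card (Aut n EG) \<noteq> 0"
    using finite_Aut[of n EG] id_in_Aut[of n EG] by (auto simp: card_eq_0_iff)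
  then have "N \<noteq> 0"
    by (simp add: N_def)
  have "T j i / N * hatT n EG (labelled_G n EG i j) j' i' =
      (\<Sum>\<sigma>\<in>Aut n EG. (if map \<sigma> j = j' \<and> map \<sigma> i = i' then T j i else 0) / N)"
    if "(j, i) \<in> I" for j i
  proof -
    have "set j \<subseteq> {0..<n}" "set i \<subseteq> {0..<n}"
      using T that set_idx unfolding I_def invariant_matrix_def by blast+
    then show ?thesis
      by (simp add: hatT_labelled_G[OF EG] sum_distrib_left) (intro sum.cong refl, simp)
  qed
  then have "(\<Sum>(j, i)\<in>I. T j i / N * hatT n EG (labelled_G n EG i j) j' i') =
      (\<Sum>(j, i)\<in>I. \<Sum>\<sigma>\<in>Aut n EG. (if map \<sigma> j = j' \<and> map \<sigma> i = i' then T j i else 0) / N)"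
    by (intro sum.cong refl) auto
  also have "\<dots> = (\<Sum>\<sigma>\<in>Aut n EG. (\<Sum>(j, i)\<in>I. if map \<sigma> j = j' \<and> map \<sigma> i = i' then T j i else 0) / N)"
    unfolding case_prod_unfold sum_divide_distrib by (rule sum.swap)
  also have "\<dots> = (\<Sum>\<sigma>\<in>Aut n EG. T j' i' / N)"
    unfolding I_def using T by (simp add: invariant_matrix_sum_preimage)
  also have "\<dots> = T j' i'"
    using \<open>N \<noteq> 0\<close> by (simp add: N_def)
  finally show ?thesis
    unfolding I_def N_def .
qed

lemma invariant_matrix_in_CG:
  assumes EG: "EG \<subseteq> {0..<n} \<times> {0..<n}" "sym EG" and normal: "normal A (Z2free n)"
    and inv: "End_invariant n EG A" and T: "invariant_matrix n EG A k l T"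
  shows "T \<in> CG n EG (Gam_category n EG A) k l"
proof -
  define I where "I = {(j, i). T j i \<noteq> 0}"
  define d where "d = (\<lambda>(j, i). T j i / of_nat (card (Aut n EG)))"
  define f where "f = (\<lambda>(j, i). hatT n EG (labelled_G n EG i j))"
  have supp: "j \<in> idx n l \<and> i \<in> idx n k \<and> gam_word n A i = gam_word n A j" if "(j, i) \<in> I" for j i
    using T that unfolding I_def invariant_matrix_def by blast
  have "T = (\<lambda>j' i'. \<Sum>x\<in>I. d x * f x j' i')"
    using invariant_matrix_average[OF EG(1) T]
    by (intro ext) (simp add: I_def d_def f_def case_prod_unfold)
  moreover have "finite I"
    unfolding I_def by (rule finite_support_invariant_matrix[OF T])
  moreover have "f x \<in> {hatT n EG K | K. K \<in> Gam_category n EG A \<and> length (bin K) = k \<and> length (bout K) = l}"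
    if "x \<in> I" for x
  proof -
    obtain j i where x: "x = (j, i)"
      by (cases x)
    have "labelled_G n EG i j \<in> Gam_category n EG A"
      using supp[OF that[unfolded x]] labelled_G_in_Gam_category[OF EG normal inv set_idx set_idx] by blast
    moreover have "length (bin (labelled_G n EG i j)) = k" "length (bout (labelled_G n EG i j)) = l"
      using supp[OF that[unfolded x]] by (simp_all add: labelled_G_def idx_def)
    ultimately show ?thesis
      unfolding x f_def prod.case by blast
  qed
  ultimately show ?thesis
    unfolding CG_def by (simp add: lin_span_sum)
qed

theorem proposition5p5:
  fixes n :: nat and EG :: "(nat \<times> nat) set" and A :: "nat list set"
  assumes "EG \<subseteq> {0..<n} \<times> {0..<n}" and "sym EG"
    and "normal A (Z2free n)"
    and "End_invariant n EG A"
  shows "\<exists>C. group_theoretical C \<and> (\<forall>k l. CG n EG C k l = Mor n EG A k l)"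
proof (intro exI conjI allI equalityI)
  show "group_theoretical (Gam_category n EG A)"
    using assms(3) by (rule Gam_category_group_theoretical)
  fix k l
  show "CG n EG (Gam_category n EG A) k l \<subseteq> Mor n EG A k l"
    using assms(3,1) by (rule CG_subset_Mor)
  show "Mor n EG A k l \<subseteq> CG n EG (Gam_category n EG A) k l"
    using invariant_matrix_in_CG[OF assms] invariant_matrix_if_Mor[OF assms(3)] by blast
qed

end
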